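(* There exists a unique $C^*<0$ such that $u(C^* )=0$, and this $C^*$ is the unique maximizer of $v$ over $(-\infty,B^*]$.
   Context: $\Phi$ is the standard normal distribution function. $B^*\approx0.84$ is the unique positive solution of $\sqrt{2\pi}(1-B^2)e^{B^2/2}\Phi(B)=B$. For $C\le B^*$ define $$v(C):=\frac{1}{\Phi(-C)}\left[(1-(B^* )^2)\Phi(C)-C\frac{e^{-C^2/2}}{\sqrt{2\pi}}\right],$$ $$u(C):=1-(B^* )^2-(1-C^2)\Phi(-C)-\frac{C}{\sqrt{2\pi}}e^{-C^2/2}.$$ *)

theory Defs
  imports "HOL-Probability.Probability"
begin

definition Phi :: "real \<Rightarrow> real" where
  "Phi x = (LINT t:{..x}|lborel. std_normal_density t)"

definition Bstar :: real where
  "Bstar = (THE B. B > 0 \<and> sqrt (2*pi) * (1 - B\<^sup>2) * exp (B\<^sup>2 / 2) * Phi B = B)"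

definition v :: "real \<Rightarrow> real" where
  "v C = (1 / Phi (-C)) * ((1 - Bstar\<^sup>2) * Phi C - C * exp (- C\<^sup>2 / 2) / sqrt (2*pi))"

definition u :: "real \<Rightarrow> real" where
  "u C = 1 - Bstar\<^sup>2 - (1 - C\<^sup>2) * Phi (-C) - C / sqrt (2*pi) * exp (- C\<^sup>2 / 2)"

end

theory Submission imports Defs begin

text \<open>
  Differentiation gives \<open>u' C = 2 C \<Phi>(-C)\<close> and \<open>v' C = \<phi>(C) u(C) / \<Phi>(-C)\<^sup>2\<close>, so \<open>u\<close> is
  strictly decreasing on \<open>(-\<infinity>,0]\<close>, strictly increasing on \<open>[0,\<infinity>)\<close>, and \<open>v\<close> rises exactly
  where \<open>u > 0\<close>. Since \<open>\<Phi>(-x) = 1 - \<Phi>(x)\<close>, the defining equation of \<open>B\<^sup>*\<close> says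
  \<open>u(B\<^sup>*) = 0\<close>, and it forces \<open>B\<^sup>* < 1\<close>; hence \<open>u(-2) > 0\<close> while \<open>u(0) < u(B\<^sup>*) = 0\<close>.
  So \<open>u\<close> has a single negative zero \<open>C\<^sup>*\<close>, is positive to its left and negative on
  \<open>(C\<^sup>*, B\<^sup>*)\<close>, which makes \<open>C\<^sup>*\<close> the strict maximiser of \<open>v\<close> on \<open>(-\<infinity>, B\<^sup>*]\<close>.
\<close>

abbreviation phi :: "real \<Rightarrow> real" where
  "phi \<equiv> std_normal_density"

lemma phi_pos: "0 < phi x"
  by (simp add: normal_density_pos)

lemma phi_minus: "phi (-x) = phi x"
  by (simp add: std_normal_density_def)

lemma interval_lebesgue_integrable_phi: "interval_lebesgue_integrable lborel a b phi"
  unfolding interval_lebesgue_integrable_def set_integrable_def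
  using integrable_mult_indicator[of _ lborel phi]
  by (auto simp: integrable_normal_density)

lemma Phi_eq_interval_integral: "Phi x = (LBINT t=-\<infinity>..ereal x. phi t)"
proof -
  have "(LBINT t=-\<infinity>..ereal x. phi t) = (LBINT t : {t. -\<infinity> < ereal t \<and> ereal t \<le> ereal x}. phi t)"
    by (rule interval_integral_Ioc') simp
  also have "{t. -\<infinity> < ereal t \<and> ereal t \<le> ereal x} = {..x}"
    by auto
  finally show ?thesis
    unfolding Phi_def by simp
qed

lemma Phi_minus: "Phi (-x) = 1 - Phi x"
proof -
  have "Phi (-x) = (LBINT t=-\<infinity>..ereal (-x). phi t)"
    by (rule Phi_eq_interval_integral)
  also have "\<dots> = (LBINT t=ereal x..\<infinity>. phi (-t))"
    by (subst interval_integral_reflect) simp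
  finally have upper_tail: "Phi (-x) = (LBINT t=ereal x..\<infinity>. phi t)"
    by (simp add: phi_minus)
  have "(LBINT t=-\<infinity>..ereal x. phi t) + (LBINT t=ereal x..\<infinity>. phi t) = (LBINT t=-\<infinity>..\<infinity>. phi t)"
    by (rule interval_integral_sum) (rule interval_lebesgue_integrable_phi)
  also have "\<dots> = 1"
    by (simp add: interval_lebesgue_integral_def set_lebesgue_integral_def)
  finally show ?thesis
    using upper_tail Phi_eq_interval_integral[of x] by simp
qed

lemma Phi_0: "Phi 0 = 1/2"
  using Phi_minus[of 0] by simp

lemma Phi_eq_Phi_0_plus: "Phi y = Phi 0 + (LBINT t=ereal 0..ereal y. phi t)"
proof -
  have "(LBINT t=-\<infinity>..ereal 0. phi t) + (LBINT t=ereal 0..ereal y. phi t) = (LBINT t=-\<infinity>..ereal y. phi t)"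
    by (rule interval_integral_sum) (rule interval_lebesgue_integrable_phi)
  then show ?thesis
    using Phi_eq_interval_integral[of y] Phi_eq_interval_integral[of 0] by simp
qed

lemma Phi_has_real_derivative: "(Phi has_real_derivative phi x) (at x)"
proof -
  define a where "a = min x 0 - 1"
  define b where "b = max x 0 + 1"
  have "continuous_on {a..b} phi"
    unfolding std_normal_density_def by (intro continuous_intros) auto
  then have "((\<lambda>y. LBINT t=ereal 0..ereal y. phi t) has_vector_derivative phi x) (at x within {a..b})"
    by (intro interval_integral_FTC2[of a 0 b]) (auto simp: a_def b_def)
  moreover have "at x within {a..b} = at x"
    by (rule at_within_Icc_at) (auto simp: a_def b_def)
  ultimately have "((\<lambda>y. Phi 0 + (LBINT t=ereal 0..ereal y. phi t)) has_real_derivative phi x) (at x)"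
    by (auto intro!: derivative_eq_intros simp: has_real_derivative_iff_has_vector_derivative)
  then show ?thesis
    by (simp flip: Phi_eq_Phi_0_plus)
qed

lemma has_real_derivative_Phi_comp[derivative_intros]:
  "(g has_real_derivative g') (at x within s) \<Longrightarrow>
   ((\<lambda>x. Phi (g x)) has_real_derivative (phi (g x) * g')) (at x within s)"
  by (rule DERIV_chain2[OF Phi_has_real_derivative])

lemma continuous_on_Phi: "continuous_on S Phi"
  by (meson DERIV_isCont Phi_has_real_derivative continuous_at_imp_continuous_on)

lemma Phi_strict_mono: "x < y \<Longrightarrow> Phi x < Phi y"
  by (rule DERIV_pos_imp_increasing_open[OF _ _ continuous_on_Phi])
     (auto intro: Phi_has_real_derivative phi_pos)

lemma Phi_pos: "0 < Phi x"
proof -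
  have "0 \<le> Phi (x - 1)"
    unfolding Phi_def set_lebesgue_integral_def
    by (rule Bochner_Integration.integral_nonneg) (auto simp: indicator_def)
  then show ?thesis
    using Phi_strict_mono[of "x - 1" x] by simp
qed

lemma strict_max_of_derivative_sign_change:
  fixes f f' :: "real \<Rightarrow> real"
  assumes deriv: "\<And>x. (f has_real_derivative f' x) (at x)"
    and rising: "\<And>x. x < c \<Longrightarrow> 0 < f' x"
    and falling: "\<And>x. c < x \<Longrightarrow> x < b \<Longrightarrow> f' x < 0"
    and "x \<le> b" "x \<noteq> c"
  shows "f x < f c"
proof -
  have cont: "continuous_on S f" for S
    by (meson DERIV_isCont deriv continuous_at_imp_continuous_on)
  show ?thesis
  proof (cases "x < c")
    case True
    then show ?thesis
      by (rule DERIV_pos_imp_increasing_open[OF _ _ cont]) (use deriv rising in auto)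
  next
    case False
    with assms(4,5) have "c < x" by simp
    then show ?thesis
      by (rule DERIV_neg_imp_decreasing_open[OF _ _ cont]) (meson deriv falling assms(4) less_le_trans)
  qed
qed

definition Bstar_residual :: "real \<Rightarrow> real" where
  "Bstar_residual B = (1 - B\<^sup>2) * Phi B - B * phi B"

lemma Bstar_residual_has_real_derivative:
  "(Bstar_residual has_real_derivative (-2 * B * Phi B)) (at B)"
  unfolding Bstar_residual_def
  by (auto intro!: derivative_eq_intros simp: std_normal_density_def field_simps power2_eq_square)

lemma Bstar_equation_iff:
  "sqrt (2*pi) * (1 - B\<^sup>2) * exp (B\<^sup>2 / 2) * Phi B = B \<longleftrightarrow> Bstar_residual B = 0"
proof -
  define E where "E = sqrt (2*pi) * exp (B\<^sup>2 / 2)"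
  have "E > 0"
    unfolding E_def by simp
  have "E * phi B = 1"
    unfolding E_def std_normal_density_def by (simp add: exp_minus field_simps)
  have "sqrt (2*pi) * (1 - B\<^sup>2) * exp (B\<^sup>2 / 2) * Phi B = E * ((1 - B\<^sup>2) * Phi B)"
    unfolding E_def by simp
  moreover have "B = E * (B * phi B)"
    using \<open>E * phi B = 1\<close> by (simp add: algebra_simps)
  ultimately have "sqrt (2*pi) * (1 - B\<^sup>2) * exp (B\<^sup>2 / 2) * Phi B = B \<longleftrightarrow>
      E * ((1 - B\<^sup>2) * Phi B) = E * (B * phi B)"
    by metis
  also have "\<dots> \<longleftrightarrow> Bstar_residual B = 0"
    using \<open>E > 0\<close> unfolding Bstar_residual_def by simp
  finally show ?thesis .
qed

lemma Bstar_pos_residual_zero: "0 < Bstar \<and> Bstar_residual Bstar = 0"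
proof -
  have cont: "continuous_on S Bstar_residual" for S
    by (meson DERIV_isCont Bstar_residual_has_real_derivative continuous_at_imp_continuous_on)
  have at_0: "Bstar_residual 0 = 1/2"
    unfolding Bstar_residual_def by (simp add: Phi_0)
  have "Bstar_residual 1 < 0"
    unfolding Bstar_residual_def using phi_pos[of 1] by simp
  then obtain B where B: "0 \<le> B" "B \<le> 1" "Bstar_residual B = 0"
    using IVT2'[of Bstar_residual 1 0 0, OF _ _ _ cont] at_0 by auto
  have "B \<noteq> 0"
    using B at_0 by auto
  with B have B_pos: "0 < B"
    by simp
  have decreasing: "Bstar_residual y < Bstar_residual x" if "0 < x" "x < y" for x y
    by (rule DERIV_neg_imp_decreasing_open[OF that(2) _ cont])
       (use that Phi_pos in \<open>auto intro!: exI Bstar_residual_has_real_derivative\<close>)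
  have "Bstar = B"
    unfolding Bstar_def
  proof (rule the_equality)
    show "B > 0 \<and> sqrt (2*pi) * (1 - B\<^sup>2) * exp (B\<^sup>2 / 2) * Phi B = B"
      using B_pos B(3) by (simp add: Bstar_equation_iff)
  next
    fix y
    assume "y > 0 \<and> sqrt (2*pi) * (1 - y\<^sup>2) * exp (y\<^sup>2 / 2) * Phi y = y"
    then show "y = B"
      using decreasing[of B y] decreasing[of y B] B_pos B(3)
      by (cases y B rule: linorder_cases) (auto simp: Bstar_equation_iff)
  qed
  with B_pos B(3) show ?thesis
    by simp
qed

lemma one_minus_Bstar_squared_pos: "0 < 1 - Bstar\<^sup>2"
proof -
  have "0 < Bstar * phi Bstar"
    using Bstar_pos_residual_zero phi_pos[of Bstar] by simp
  then have "0 < (1 - Bstar\<^sup>2) * Phi Bstar"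
    using Bstar_pos_residual_zero unfolding Bstar_residual_def by simp
  then show ?thesis
    using Phi_pos[of Bstar] by (simp add: zero_less_mult_iff)
qed

lemma u_Bstar: "u Bstar = 0"
  using Bstar_pos_residual_zero
  unfolding u_def Bstar_residual_def Phi_minus std_normal_density_def
  by (simp add: algebra_simps)

lemma u_has_real_derivative: "(u has_real_derivative (2 * C * Phi (-C))) (at C)"
  unfolding u_def
  by (auto intro!: derivative_eq_intros simp: std_normal_density_def field_simps power2_eq_square)

lemma continuous_on_u: "continuous_on S u"
  by (meson DERIV_isCont u_has_real_derivative continuous_at_imp_continuous_on)

lemma u_strict_antimono_nonpos: "x < y \<Longrightarrow> y \<le> 0 \<Longrightarrow> u y < u x"
  by (rule DERIV_neg_imp_decreasing_open[OF _ _ continuous_on_u])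
     (use Phi_pos in \<open>auto intro!: exI u_has_real_derivative simp: mult_neg_pos\<close>)

lemma u_strict_mono_nonneg: "0 \<le> x \<Longrightarrow> x < y \<Longrightarrow> u x < u y"
  by (rule DERIV_pos_imp_increasing_open[OF _ _ continuous_on_u])
     (use Phi_pos in \<open>auto intro!: exI u_has_real_derivative\<close>)

lemma u_sign_change:
  obtains Cs where "Cs < 0" "u Cs = 0"
    "\<And>x. x < Cs \<Longrightarrow> 0 < u x" "\<And>x. Cs < x \<Longrightarrow> x < Bstar \<Longrightarrow> u x < 0"
proof -
  have Bstar_pos: "0 < Bstar"
    using Bstar_pos_residual_zero by simp
  have "0 < u (-2)"
    unfolding u_def using one_minus_Bstar_squared_pos Phi_pos[of 2] by (simp add: add_pos_pos)
  moreover have u_0: "u 0 < 0"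
    using u_strict_mono_nonneg[of 0 Bstar] Bstar_pos u_Bstar by simp
  ultimately obtain Cs where Cs: "-2 \<le> Cs" "Cs \<le> 0" "u Cs = 0"
    using IVT2'[of u 0 0 "-2", OF _ _ _ continuous_on_u] by auto
  have "Cs \<noteq> 0"
    using Cs u_0 by auto
  with Cs have Cs_neg: "Cs < 0"
    by simp
  show ?thesis
  proof (rule that[OF Cs_neg Cs(3)])
    show "0 < u x" if "x < Cs" for x
      using u_strict_antimono_nonpos[of x Cs] that Cs by simp
    show "u x < 0" if "Cs < x" "x < Bstar" for x
      using u_strict_antimono_nonpos[of Cs x] u_strict_mono_nonneg[of x Bstar] that Cs u_Bstar
      by (cases "x \<le> 0") auto
  qed
qed

lemma v_has_real_derivative: "(v has_real_derivative (phi C * u C / (Phi (-C))\<^sup>2)) (at C)"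
proof -
  have Phi_eq: "Phi C = 1 - Phi (-C)"
    using Phi_minus[of C] by simp
  have "Phi (-C) \<noteq> 0"
    using Phi_pos[of "-C"] by simp
  then show ?thesis
    unfolding v_def u_def
    by (auto intro!: derivative_eq_intros simp: Phi_eq std_normal_density_def field_simps power2_eq_square)
qed

theorem lemma3p1:
  shows "\<exists>Cs. Cs < 0 \<and> u Cs = 0 \<and> (\<forall>C. C < 0 \<and> u C = 0 \<longrightarrow> C = Cs)
          \<and> Cs \<le> Bstar \<and> (\<forall>C. C \<le> Bstar \<and> C \<noteq> Cs \<longrightarrow> v C < v Cs)"
proof (rule u_sign_change)
  fix Cs
  assume Cs_neg: "Cs < 0" and u_Cs: "u Cs = 0"
    and u_pos: "\<And>x. x < Cs \<Longrightarrow> 0 < u x"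
    and u_neg: "\<And>x. Cs < x \<Longrightarrow> x < Bstar \<Longrightarrow> u x < 0"
  have Cs_le_Bstar: "Cs \<le> Bstar"
    using Cs_neg Bstar_pos_residual_zero by simp
  have unique: "C = Cs" if "C < 0" "u C = 0" for C
  proof (rule ccontr)
    assume "C \<noteq> Cs"
    then show False
      using u_pos[of C] u_neg[of C] that Cs_le_Bstar Bstar_pos_residual_zero by fastforce
  qed
  have v'_eq: "phi x * u x / (Phi (-x))\<^sup>2 = u x * (phi x / (Phi (-x))\<^sup>2)" for x
    by simp
  have weight_pos: "0 < phi x / (Phi (-x))\<^sup>2" for x
    using phi_pos[of x] Phi_pos[of "-x"] by simp
  have max: "v C < v Cs" if "C \<le> Bstar" "C \<noteq> Cs" for C
  proof (rule strict_max_of_derivative_sign_change[OF v_has_real_derivative _ _ that])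
    show "0 < phi x * u x / (Phi (-x))\<^sup>2" if "x < Cs" for x
      unfolding v'_eq using u_pos[OF that] weight_pos[of x] by (rule mult_pos_pos)
    show "phi x * u x / (Phi (-x))\<^sup>2 < 0" if "Cs < x" "x < Bstar" for x
      unfolding v'_eq using u_neg[OF that] weight_pos[of x] by (rule mult_neg_pos)
  qed
  show ?thesis
    using Cs_neg u_Cs unique Cs_le_Bstar max by blast
qed
end
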